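(* For every countably infinite graph $G$ the following are equivalent: (i) for every nontrivial ideal $\mathcal{I}$ on $\mathbb{N}$, $G$ is $\mathcal{I}^+$-Ramsey; (ii) in the Rado coloring of $K_\mathbb{N}$ there is a monochromatic copy of $G$ whose vertex set belongs to $\mathrm{nwd}^+$; (iii) $G$ is finitely ruled, i.e. there is a finite set $S\subseteq V(G)$ such that $G-S$ has no finite dominating set.
   Context: $\mathbb{N}=\{1,2,\dots\}$ and $K_\mathbb{N}$ is the complete graph on $\mathbb{N}$; a copy of $G$ is a subgraph isomorphic to $G$, monochromatic if all its edges have the same color. An ideal on $\mathbb{N}$ is a family $\mathcal{I}$ of subsets closed under subsets and finite unions; it is nontrivial if $\mathbb{N}\notin\mathcal{I}$ and $\mathcal{I}$ contains all finite subsets of $\mathbb{N}$. $\mathcal{I}^+=\mathcal{P}(\mathbb{N})\setminus\mathcal{I}$. $G$ is $\mathcal{I}^+$-Ramsey if for every finite coloring of the edges of $K_\mathbb{N}$ there is a monochromatic copy of $G$ whose vertex set lies in $\mathcal{I}^+$. The Rado coloring $\rho$ assigns to the edge $\{s,t\}$ with $s<t$ the $s$-th bit (counting from the least significant bit, which is the 1st) of the binary expansion of $t$. The truncated binary expansion of $n$ is its binary expansion with the leading 1 removed. For $s,t\in\mathbb{N}$, $t$ extends $s$ if $s\le t$ and the truncated binary expansion of $s$ is a terminal (least-significant) segment of the truncated binary expansion of $t$; $\langle s\rangle$ is the set of $t$ extending $s$. $\mathrm{nwd}$ is the ideal of all $A\subseteq\mathbb{N}$ such that for every $s\in\mathbb{N}$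 there is $t$ extending $s$ with $A\cap\langle t\rangle=\emptyset$, and $\mathrm{nwd}^+=\mathcal{P}(\mathbb{N})\setminus\mathrm{nwd}$. A set $X\subseteq V(G)$ is dominating if every vertex outside $X$ has a neighbor in $X$. *)

theory Defs
  imports Main "HOL-Library.Countable_Set" "HOL-Library.Sublist"
begin

definition Npos :: "nat set" where "Npos = {n. 1 \<le> n}"

definition is_graph :: "'a set \<Rightarrow> ('a \<Rightarrow> 'a \<Rightarrow> bool) \<Rightarrow> bool" where
  "is_graph V E \<longleftrightarrow> (\<forall>u v. E u v \<longrightarrow> u \<in> V \<and> v \<in> V \<and> u \<noteq> v \<and> E v u)"

definition nontrivial_ideal :: "nat set set \<Rightarrow> bool" where
  "nontrivial_ideal I \<longleftrightarrow>
     (\<forall>A\<in>I. A \<subseteq> Npos) \<and>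
     (\<forall>A\<in>I. \<forall>B. B \<subseteq> A \<longrightarrow> B \<in> I) \<and>
     (\<forall>A\<in>I. \<forall>B\<in>I. A \<union> B \<in> I) \<and>
     Npos \<notin> I \<and>
     (\<forall>A. finite A \<and> A \<subseteq> Npos \<longrightarrow> A \<in> I)"

definition positive_sets :: "nat set set \<Rightarrow> nat set set" where
  "positive_sets I = Pow Npos - I"

text \<open>An edge colouring of K_N: the colour of the edge {s,t} with s<t is c s t.
  It is finite if only finitely many colours are used.\<close>
definition finite_coloring :: "(nat \<Rightarrow> nat \<Rightarrow> 'c) \<Rightarrow> bool" where
  "finite_coloring c \<longleftrightarrow> finite {c s t | s t. 1 \<le> s \<and> s < t}"

definition edge_color :: "(nat \<Rightarrow> nat \<Rightarrow> 'c) \<Rightarrow> nat \<Rightarrow> nat \<Rightarrow> 'c" where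
  "edge_color c s t = c (min s t) (max s t)"

definition mono_copy_on :: "'a set \<Rightarrow> ('a \<Rightarrow> 'a \<Rightarrow> bool) \<Rightarrow> (nat \<Rightarrow> nat \<Rightarrow> 'c) \<Rightarrow> nat set \<Rightarrow> bool" where
  "mono_copy_on V E c X \<longleftrightarrow>
     (\<exists>f col. inj_on f V \<and> f ` V \<subseteq> Npos \<and> X = f ` V \<and>
        (\<forall>u\<in>V. \<forall>v\<in>V. E u v \<longrightarrow> edge_color c (f u) (f v) = col))"

definition ideal_plus_Ramsey :: "'a set \<Rightarrow> ('a \<Rightarrow> 'a \<Rightarrow> bool) \<Rightarrow> nat set set \<Rightarrow> bool" where
  "ideal_plus_Ramsey V E I \<longleftrightarrow>
     (\<forall>c :: nat \<Rightarrow> nat \<Rightarrow> nat. finite_coloring c \<longrightarrow>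
        (\<exists>X. X \<in> positive_sets I \<and> mono_copy_on V E c X))"

text \<open>Rado colouring: the s-th bit (LSB is the 1st) of t.\<close>
definition rado :: "nat \<Rightarrow> nat \<Rightarrow> nat" where
  "rado s t = (t div 2 ^ (s - 1)) mod 2"

fun bin :: "nat \<Rightarrow> bool list" where
  "bin n = (if n = 0 then [] else odd n # bin (n div 2))"

declare bin.simps[simp del]

definition trunc_bin :: "nat \<Rightarrow> bool list" where
  "trunc_bin n = butlast (bin n)"

text \<open>t extends s: s \<le> t and trunc(s) is a least-significant (terminal) segment of trunc(t);
  with LSB-first lists this is the prefix relation.\<close>
definition extends :: "nat \<Rightarrow> nat \<Rightarrow> bool" where
  "extends t s \<longleftrightarrow> s \<le> t \<and> prefix (trunc_bin s) (trunc_bin t)"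

definition cone :: "nat \<Rightarrow> nat set" where
  "cone s = {t \<in> Npos. extends t s}"

definition nwd :: "nat set set" where
  "nwd = {A. A \<subseteq> Npos \<and> (\<forall>s\<in>Npos. \<exists>t\<in>Npos. extends t s \<and> A \<inter> cone t = {})}"

definition nwd_plus :: "nat set set" where
  "nwd_plus = Pow Npos - nwd"

definition dominating :: "'a set \<Rightarrow> ('a \<Rightarrow> 'a \<Rightarrow> bool) \<Rightarrow> 'a set \<Rightarrow> bool" where
  "dominating W E D \<longleftrightarrow> D \<subseteq> W \<and> (\<forall>v\<in>W - D. \<exists>d\<in>D. E v d)"

definition finitely_ruled :: "'a set \<Rightarrow> ('a \<Rightarrow> 'a \<Rightarrow> bool) \<Rightarrow> bool" where
  "finitely_ruled V E \<longleftrightarrow>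
     (\<exists>S. finite S \<and> S \<subseteq> V \<and> \<not> (\<exists>D. finite D \<and> dominating (V - S) E D))"

end

theory Submission
  imports Defs
begin

text \<open>
  (i) implies (ii): nwd is a nontrivial ideal and the Rado colouring uses two colours.

  (ii) implies (iii): if no finite set rules G, every monochromatic Rado copy is nowhere dense.
  Inside a cone, pass to a subcone lying above the finitely many copy points below the root
  length and above a finite dominating set D of the remaining vertices, with the Rado colour
  towards D fixed to the wrong colour; a copy point there would be joined to its dominating
  neighbour in the wrong colour.

  (iii) implies (i): extend the ideal to a maximal one J, whose positive sets form an
  ultrafilter. Then there are a colour i and a positive set A all of whose points have a
  positive i-neighbourhood, so finite intersections of such neighbourhoods with A are positive
  and a copy of G in A can be built vertex by vertex. Let S rule G. Interleaving, every point b
  of the positive set B of common i-neighbours of the images of S can be made an image: some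
  vertex outside the finite part P built so far has no neighbour in P - S, since P - S does not
  dominate G - S, and it may be sent to b. The image of the copy contains B and is positive.
\<close>

lemma bin_0 [simp]: "bin 0 = []"
  by (subst bin.simps) simp

lemma bin_nonzero: "n \<noteq> 0 \<Longrightarrow> bin n = odd n # bin (n div 2)"
  by (subst bin.simps) simp

lemma nth_bin: "k < length (bin n) \<Longrightarrow> bin n ! k = odd (n div 2 ^ k)"
proof (induction n arbitrary: k rule: bin.induct)
  case (1 n)
  then have "n \<noteq> 0"
    by (cases "n = 0") simp_all
  then have bin_n: "bin n = odd n # bin (n div 2)"
    by (rule bin_nonzero)
  show ?case
  proof (cases k)
    case (Suc j)
    then have "bin (n div 2) ! j = odd (n div 2 div 2 ^ j)"
      using 1 \<open>n \<noteq> 0\<close> by (simp add: bin_n)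
    then show ?thesis
      by (simp add: bin_n Suc div_mult2_eq)
  qed (simp add: bin_n)
qed

lemma less_two_power_length_bin: "n < 2 ^ length (bin n)"
proof (induction n rule: bin.induct)
  case (1 n)
  show ?case
  proof (cases "n = 0")
    case False
    then have "n div 2 < 2 ^ length (bin (n div 2))"
      using 1 by simp
    with False show ?thesis
      by (simp add: bin_nonzero)
  qed simp
qed

lemma length_bin: "n \<noteq> 0 \<Longrightarrow> length (bin n) = Suc (length (trunc_bin n))"
  by (simp add: trunc_bin_def bin_nonzero)

lemma nth_trunc_bin:
  assumes "n \<noteq> 0" "k < length (trunc_bin n)"
  shows "trunc_bin n ! k = odd (n div 2 ^ k)"
proof -
  have "k < length (bin n)"
    using assms length_bin by simp
  then show ?thesis
    using assms(2) by (simp add: trunc_bin_def nth_butlast nth_bin)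
qed

lemma less_two_power_trunc_bin: "n < 2 ^ Suc (length (trunc_bin n))"
  using less_two_power_length_bin[of n] length_bin[of n] by (cases "n = 0") auto

fun nat_of_bits :: "bool list \<Rightarrow> nat" where
  "nat_of_bits [] = 0"
| "nat_of_bits (b # bs) = of_bool b + 2 * nat_of_bits bs"

lemma bin_nat_of_bits: "bin (nat_of_bits (bs @ [True])) = bs @ [True]"
proof (induction bs)
  case Nil
  then show ?case by (simp add: bin_nonzero)
next
  case (Cons b bs)
  then have "nat_of_bits (bs @ [True]) \<noteq> 0" by (metis bin_0 snoc_eq_iff_butlast)
  with Cons show ?case by (simp add: bin_nonzero)
qed

lemma trunc_bin_nat_of_bits: "trunc_bin (nat_of_bits (bs @ [True])) = bs"
  by (simp add: trunc_bin_def bin_nat_of_bits)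

lemma two_power_le_nat_of_bits: "2 ^ length bs \<le> nat_of_bits (bs @ [True])"
  by (induction bs) auto

lemma extension_with_suffix:
  assumes "s \<in> Npos" "w \<noteq> []"
  obtains t where "t \<in> Npos" "extends t s" "trunc_bin t = trunc_bin s @ w"
    "2 ^ (length (trunc_bin s) + length w) \<le> t"
proof -
  define t where "t = nat_of_bits ((trunc_bin s @ w) @ [True])"
  have tb: "trunc_bin t = trunc_bin s @ w"
    unfolding t_def by (rule trunc_bin_nat_of_bits)
  have ge: "2 ^ (length (trunc_bin s) + length w) \<le> t"
    unfolding t_def using two_power_le_nat_of_bits[of "trunc_bin s @ w"] by simp
  have "s < 2 ^ Suc (length (trunc_bin s))"
    by (rule less_two_power_trunc_bin)
  also have "\<dots> \<le> 2 ^ (length (trunc_bin s) + length w)"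
    using \<open>w \<noteq> []\<close> by (intro power_increasing) (auto simp: Suc_le_eq)
  finally have "s < t" using ge by linarith
  then have "extends t s" "t \<in> Npos"
    using \<open>s \<in> Npos\<close> by (simp_all add: extends_def tb Npos_def)
  with tb ge show thesis using that by blast
qed

lemma extends_refl: "extends s s"
  by (simp add: extends_def)

lemma extends_trans: "extends u t \<Longrightarrow> extends t s \<Longrightarrow> extends u s"
  by (auto simp: extends_def prefix_def)

lemma cone_subset: "extends t s \<Longrightarrow> cone t \<subseteq> cone s"
  unfolding cone_def using extends_trans by blast

lemma le_of_mem_cone: "u \<in> cone t \<Longrightarrow> t \<le> u"
  by (simp add: cone_def extends_def)

lemma mem_cone_self: "t \<in> Npos \<Longrightarrow> t \<in> cone t"
  by (simp add: cone_def extends_refl)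

lemma rado_mem_cone:
  assumes "u \<in> cone t" "0 < d" "d \<le> length (trunc_bin t)"
  shows "rado d u = of_bool (trunc_bin t ! (d - 1))"
proof -
  have u: "u \<noteq> 0" and pre: "prefix (trunc_bin t) (trunc_bin u)"
    using assms(1) by (auto simp: cone_def extends_def Npos_def)
  obtain zs where tu: "trunc_bin u = trunc_bin t @ zs"
    using pre by (rule prefixE)
  have d: "d - 1 < length (trunc_bin t)"
    using assms(2,3) by simp
  then have "trunc_bin t ! (d - 1) = trunc_bin u ! (d - 1)"
    by (simp add: tu nth_append)
  also have "\<dots> = odd (u div 2 ^ (d - 1))"
    using d by (intro nth_trunc_bin[OF u]) (simp add: tu)
  finally have "trunc_bin t ! (d - 1) = odd (u div 2 ^ (d - 1))" .
  then show ?thesis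
    unfolding rado_def by (simp only: of_bool_odd_eq_mod_2)
qed

lemma subcone_with_constant_rado:
  assumes s: "s \<in> Npos" and F: "finite F" "\<forall>d\<in>F. length (trunc_bin s) < d"
  obtains t where "t \<in> Npos" "extends t s" "m < t" "\<forall>u\<in>cone t. \<forall>d\<in>F. rado d u = of_bool b"
proof -
  define L where "L = length (trunc_bin s)"
  obtain n where n: "\<forall>d\<in>F. d < n"
    using finite_nat_bounded[OF F(1)] by (auto simp: lessThan_def)
  define w where "w = map (\<lambda>j. Suc (L + j) \<in> F \<and> b) [0..<n + m + 1]"
  have "w \<noteq> []" by (simp add: w_def)
  then obtain t where t: "t \<in> Npos" "extends t s" "trunc_bin t = trunc_bin s @ w"
    and ge: "2 ^ (L + length w) \<le> t"
    using extension_with_suffix[OF s] unfolding L_def by blast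
  have "m < 2 ^ m" by (rule less_exp)
  also have "\<dots> \<le> 2 ^ (L + length w)"
    by (intro power_increasing) (simp_all add: w_def)
  finally have "m < t" using ge by linarith
  moreover have "rado d u = of_bool b" if u: "u \<in> cone t" and d: "d \<in> F" for u d
  proof -
    have "L < d" "d < n" using d F(2) n by (auto simp: L_def)
    then have "trunc_bin t ! (d - 1) = w ! (d - 1 - L)"
      by (auto simp: t(3) nth_append L_def[symmetric])
    also have "\<dots> = b"
    proof -
      have "d - 1 - L < n + m + 1" "Suc (L + (d - 1 - L)) = d"
        using \<open>L < d\<close> \<open>d < n\<close> by linarith+
      with d show ?thesis by (simp add: w_def del: upt_Suc)
    qed
    finally have "trunc_bin t ! (d - 1) = b" .
    moreover have "d \<le> length (trunc_bin t)"
      using \<open>d < n\<close> by (simp add: t(3) L_def[symmetric] w_def)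
    ultimately show ?thesis
      using rado_mem_cone[OF u, of d] \<open>L < d\<close> by simp
  qed
  ultimately show ?thesis using that t(1,2) by blast
qed

lemma nontrivial_ideal_nwd: "nontrivial_ideal nwd"
  unfolding nontrivial_ideal_def
proof (intro conjI ballI allI impI)
  fix A assume "A \<in> nwd"
  then show "A \<subseteq> Npos" by (simp add: nwd_def)
next
  fix A B assume "A \<in> nwd" "B \<subseteq> A"
  then show "B \<in> nwd" unfolding nwd_def by blast
next
  fix A B
  assume A: "A \<in> nwd" and B: "B \<in> nwd"
  have "\<exists>t\<in>Npos. extends t s \<and> (A \<union> B) \<inter> cone t = {}" if "s \<in> Npos" for s
  proof -
    obtain t1 where t1: "t1 \<in> Npos" "extends t1 s" "A \<inter> cone t1 = {}"
      using A \<open>s \<in> Npos\<close> by (auto simp: nwd_def)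
    then obtain t2 where t2: "t2 \<in> Npos" "extends t2 t1" "B \<inter> cone t2 = {}"
      using B by (auto simp: nwd_def)
    then show ?thesis
      using t1 cone_subset[OF t2(2)] extends_trans by blast
  qed
  with A B show "A \<union> B \<in> nwd" unfolding nwd_def by blast
next
  have "1 \<in> Npos" by (simp add: Npos_def)
  then show "Npos \<notin> nwd"
    unfolding nwd_def using mem_cone_self by blast
next
  fix A
  assume A: "finite A \<and> A \<subseteq> Npos"
  then obtain m where m: "\<forall>x\<in>A. x < m"
    using finite_nat_bounded[of A] by (auto simp: lessThan_def)
  have "\<exists>t\<in>Npos. extends t s \<and> A \<inter> cone t = {}" if s: "s \<in> Npos" for s
  proof -
    obtain t where t: "t \<in> Npos" "extends t s" "m < t"
      using subcone_with_constant_rado[OF s, of "{}" m] by auto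
    have "A \<inter> cone t = {}"
      using m t(3) le_of_mem_cone by (meson disjoint_iff less_le_trans not_less_iff_gr_or_eq)
    with t show ?thesis by blast
  qed
  with A show "A \<in> nwd" unfolding nwd_def by blast
qed

lemma finite_coloring_rado: "finite_coloring rado"
proof -
  have "{rado s t | s t. 1 \<le> s \<and> s < t} \<subseteq> {0, 1}"
    by (auto simp: rado_def)
  then show ?thesis
    unfolding finite_coloring_def using finite_subset by blast
qed

lemma finite_inj_on_bounded_preimage: "inj_on f V \<Longrightarrow> finite {v \<in> V. f v \<le> (L :: nat)}"
  by (rule finite_imageD[OF finite_subset[of _ "{..L}"]]) (auto intro: inj_on_subset)

lemma rado_copy_misses_subcone:
  assumes not_ruled: "\<not> finitely_ruled V E" and "inj_on f V"
    and f_col: "\<forall>u\<in>V. \<forall>v\<in>V. E u v \<longrightarrow> edge_color rado (f u) (f v) = col" and s: "s \<in> Npos"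
  obtains t where "t \<in> Npos" "extends t s" "f ` V \<inter> cone t = {}"
proof -
  define S where "S = {v\<in>V. f v \<le> length (trunc_bin s)}"
  have "finite S" "S \<subseteq> V"
    unfolding S_def using finite_inj_on_bounded_preimage[OF \<open>inj_on f V\<close>] by auto
  then obtain D where D: "finite D" "dominating (V - S) E D"
    using not_ruled unfolding finitely_ruled_def by blast
  have DV: "D \<subseteq> V - S"
    using D(2) by (simp add: dominating_def)
  obtain m where m: "\<forall>x\<in>f ` (S \<union> D). x < m"
    using finite_nat_bounded[of "f ` (S \<union> D)"] \<open>finite S\<close> D(1) by (auto simp: lessThan_def)
  have "\<forall>d\<in>f ` D. length (trunc_bin s) < d"
    using DV by (auto simp: S_def)
  then obtain t where t: "t \<in> Npos" "extends t s" "m < t"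
    and t_rado: "\<forall>u\<in>cone t. \<forall>d\<in>f ` D. rado d u = of_bool (col \<noteq> 1)"
    using subcone_with_constant_rado[OF s finite_imageI[OF D(1)]] by blast
  have "f v \<notin> cone t" if v: "v \<in> V" for v
  proof
    assume fv: "f v \<in> cone t"
    then have "m < f v"
      using t(3) le_of_mem_cone by (blast intro: less_le_trans)
    have "v \<notin> S \<union> D"
    proof
      assume "v \<in> S \<union> D"
      then have "f v < m"
        using m by blast
      with \<open>m < f v\<close> show False
        by simp
    qed
    with v obtain d where d: "d \<in> D" "E v d"
      using D(2) by (auto simp: dominating_def)
    have "f d < m"
      using m d(1) by blast
    with \<open>m < f v\<close> have "rado (f d) (f v) = edge_color rado (f v) (f d)"
      by (simp add: edge_color_def)
    also have "\<dots> = col"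
      using f_col v DV d by blast
    finally have "rado (f d) (f v) = col" .
    moreover have "rado (f d) (f v) = of_bool (col \<noteq> 1)"
      using t_rado fv d(1) by blast
    ultimately show False
      by (cases "col = 1") auto
  qed
  with t(1,2) show ?thesis
    using that by blast
qed

lemma nwd_if_rado_copy_not_finitely_ruled:
  assumes "\<not> finitely_ruled V E" and "mono_copy_on V E rado X"
  shows "X \<in> nwd"
proof -
  obtain f col where f: "inj_on f V" "f ` V \<subseteq> Npos" "X = f ` V"
    and f_col: "\<forall>u\<in>V. \<forall>v\<in>V. E u v \<longrightarrow> edge_color rado (f u) (f v) = col"
    using assms(2) unfolding mono_copy_on_def by blast
  have "\<exists>t\<in>Npos. extends t s \<and> X \<inter> cone t = {}" if "s \<in> Npos" for s
  proof -
    obtain t where "t \<in> Npos" "extends t s" "f ` V \<inter> cone t = {}"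
      using rado_copy_misses_subcone[OF assms(1) f(1) f_col \<open>s \<in> Npos\<close>] .
    with f(3) show ?thesis
      by blast
  qed
  moreover have "X \<subseteq> Npos"
    using f(2,3) by simp
  ultimately show ?thesis
    by (simp add: nwd_def)
qed

lemma nontrivial_idealD:
  assumes "nontrivial_ideal J"
  shows ideal_subset_Npos: "A \<in> J \<Longrightarrow> A \<subseteq> Npos"
    and ideal_downward_closed: "A \<in> J \<Longrightarrow> B \<subseteq> A \<Longrightarrow> B \<in> J"
    and ideal_Un: "A \<in> J \<Longrightarrow> B \<in> J \<Longrightarrow> A \<union> B \<in> J"
    and Npos_notin_ideal: "Npos \<notin> J"
    and finite_in_ideal: "finite A \<Longrightarrow> A \<subseteq> Npos \<Longrightarrow> A \<in> J"
  using assms unfolding nontrivial_ideal_def by (elim conjE; metis)+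

lemma nontrivial_ideal_Union_chain:
  assumes "C \<noteq> {}" "\<forall>J\<in>C. nontrivial_ideal J" "\<forall>J1\<in>C. \<forall>J2\<in>C. J1 \<subseteq> J2 \<or> J2 \<subseteq> J1"
  shows "nontrivial_ideal (\<Union>C)"
  unfolding nontrivial_ideal_def
proof (intro conjI ballI allI impI)
  fix A B
  assume "A \<in> \<Union>C" "B \<in> \<Union>C"
  then obtain J1 J2 where "J1 \<in> C" "J2 \<in> C" "A \<in> J1" "B \<in> J2"
    by blast
  with assms(3) obtain J where "J \<in> C" "A \<in> J" "B \<in> J"
    by blast
  with assms(2) show "A \<union> B \<in> \<Union>C"
    using ideal_Un by blast
next
  fix A
  assume "finite A \<and> A \<subseteq> Npos"
  with assms(1,2) show "A \<in> \<Union>C"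
    using finite_in_ideal by blast
next
  fix A
  assume "A \<in> \<Union>C"
  with assms(2) show "A \<subseteq> Npos"
    using ideal_subset_Npos by blast
next
  fix A B
  assume "A \<in> \<Union>C" "B \<subseteq> A"
  with assms(2) show "B \<in> \<Union>C"
    using ideal_downward_closed by blast
next
  show "Npos \<notin> \<Union>C"
    using assms(2) Npos_notin_ideal by blast
qed

definition ideal_adjoin :: "nat set set \<Rightarrow> nat set \<Rightarrow> nat set set" where
  "ideal_adjoin M A = {B. B \<subseteq> Npos \<and> (\<exists>C\<in>M. B \<subseteq> C \<union> A)}"

lemma nontrivial_ideal_adjoin:
  assumes M: "nontrivial_ideal M" and "Npos - A \<notin> M"
  shows "nontrivial_ideal (ideal_adjoin M A)"
  unfolding nontrivial_ideal_def
proof (intro conjI ballI allI impI)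
  fix B
  assume "B \<in> ideal_adjoin M A"
  then show "B \<subseteq> Npos"
    by (simp add: ideal_adjoin_def)
next
  fix B B'
  assume "B \<in> ideal_adjoin M A" "B' \<subseteq> B"
  then show "B' \<in> ideal_adjoin M A"
    unfolding ideal_adjoin_def by blast
next
  fix B B'
  assume "B \<in> ideal_adjoin M A" "B' \<in> ideal_adjoin M A"
  then obtain C C' where C: "C \<in> M" "C' \<in> M" "B \<subseteq> C \<union> A" "B' \<subseteq> C' \<union> A"
    and "B \<union> B' \<subseteq> Npos"
    unfolding ideal_adjoin_def by blast
  moreover have "C \<union> C' \<in> M"
    using ideal_Un[OF M C(1,2)] .
  moreover have "B \<union> B' \<subseteq> (C \<union> C') \<union> A"
    using C(3,4) by blast
  ultimately show "B \<union> B' \<in> ideal_adjoin M A"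
    unfolding ideal_adjoin_def by blast
next
  show "Npos \<notin> ideal_adjoin M A"
  proof
    assume "Npos \<in> ideal_adjoin M A"
    then obtain C where "C \<in> M" "Npos - A \<subseteq> C"
      unfolding ideal_adjoin_def by blast
    then show False
      using \<open>Npos - A \<notin> M\<close> ideal_downward_closed[OF M] by blast
  qed
next
  fix B
  assume "finite B \<and> B \<subseteq> Npos"
  then have "B \<in> M"
    using finite_in_ideal[OF M] by blast
  with \<open>finite B \<and> B \<subseteq> Npos\<close> show "B \<in> ideal_adjoin M A"
    unfolding ideal_adjoin_def by blast
qed

lemma maximal_ideal_exists:
  assumes I: "nontrivial_ideal I"
  obtains J where "nontrivial_ideal J" "I \<subseteq> J" "\<forall>A. A \<subseteq> Npos \<longrightarrow> A \<in> J \<or> Npos - A \<in> J"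
proof -
  let ?Z = "{J. nontrivial_ideal J \<and> I \<subseteq> J}"
  have "\<exists>U\<in>?Z. \<forall>J\<in>C. J \<subseteq> U" if C: "C \<in> chains ?Z" for C
  proof (cases "C = {}")
    case False
    from C have "C \<subseteq> ?Z" "\<forall>J1\<in>C. \<forall>J2\<in>C. J1 \<subseteq> J2 \<or> J2 \<subseteq> J1"
      unfolding chains_def chain_subset_def by blast+
    with False have "nontrivial_ideal (\<Union>C)" "I \<subseteq> \<Union>C"
      using nontrivial_ideal_Union_chain[of C] by blast+
    then show ?thesis by blast
  qed (use I in blast)
  then obtain M where M: "nontrivial_ideal M" "I \<subseteq> M"
    and M_max: "\<forall>J\<in>?Z. M \<subseteq> J \<longrightarrow> J = M"
    using Zorn_Lemma2[of ?Z] by blast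
  have "A \<in> M \<or> Npos - A \<in> M" if A: "A \<subseteq> Npos" for A
  proof (rule ccontr)
    assume "\<not> (A \<in> M \<or> Npos - A \<in> M)"
    let ?M' = "ideal_adjoin M A"
    have "nontrivial_ideal ?M'"
      using nontrivial_ideal_adjoin[OF M(1)] \<open>\<not> (A \<in> M \<or> Npos - A \<in> M)\<close> by blast
    moreover have "M \<subseteq> ?M'"
      using ideal_subset_Npos[OF M(1)] unfolding ideal_adjoin_def by blast
    ultimately have "?M' = M"
      using M(2) M_max by blast
    moreover have "A \<in> ?M'"
      using A finite_in_ideal[OF M(1), of "{}"] unfolding ideal_adjoin_def by blast
    ultimately show False
      using \<open>\<not> (A \<in> M \<or> Npos - A \<in> M)\<close> by blast
  qed
  with M that show ?thesis
    by blast
qed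

locale maximal_ideal =
  fixes J :: "nat set set"
  assumes nontrivial: "nontrivial_ideal J"
    and set_or_complement: "A \<subseteq> Npos \<Longrightarrow> A \<in> J \<or> Npos - A \<in> J"
begin

lemma UN_in_ideal: "finite K \<Longrightarrow> (\<And>k. k \<in> K \<Longrightarrow> h k \<in> J) \<Longrightarrow> (\<Union>k\<in>K. h k) \<in> J"
proof (induction K rule: finite_induct)
  case empty
  show ?case using finite_in_ideal[OF nontrivial] by simp
next
  case (insert k K)
  then show ?case using ideal_Un[OF nontrivial] by simp
qed

lemma Npos_positive: "Npos \<in> positive_sets J"
  using Npos_notin_ideal[OF nontrivial] by (simp add: positive_sets_def)

lemma positive_superset: "A \<in> positive_sets J \<Longrightarrow> A \<subseteq> B \<Longrightarrow> B \<subseteq> Npos \<Longrightarrow> B \<in> positive_sets J"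
  using ideal_downward_closed[OF nontrivial] by (auto simp: positive_sets_def)

lemma positive_cover:
  assumes "finite K" "A \<in> positive_sets J" "A \<subseteq> (\<Union>k\<in>K. h k)"
  shows "\<exists>k\<in>K. A \<inter> h k \<in> positive_sets J"
proof (rule ccontr)
  assume "\<not> ?thesis"
  then have "A \<inter> h k \<in> J" if "k \<in> K" for k
    using that assms(2) by (auto simp: positive_sets_def)
  then have "(\<Union>k\<in>K. A \<inter> h k) \<in> J"
    by (rule UN_in_ideal[OF assms(1)])
  moreover have "(\<Union>k\<in>K. A \<inter> h k) = A"
    using assms(3) by blast
  ultimately show False
    using assms(2) by (simp add: positive_sets_def)
qed

lemma positive_Int_cover: "A \<in> positive_sets J \<Longrightarrow> A \<subseteq> B \<union> C \<Longrightarrow> C \<in> J \<Longrightarrow> A \<inter> B \<in> positive_sets J"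
proof -
  assume A: "A \<in> positive_sets J" and "A \<subseteq> B \<union> C" and C: "C \<in> J"
  then have "A \<subseteq> (A \<inter> B) \<union> C"
    by blast
  moreover have "(A \<inter> B) \<union> C \<in> J" if "A \<inter> B \<in> J"
    using ideal_Un[OF nontrivial that C] .
  ultimately show ?thesis
    using A ideal_downward_closed[OF nontrivial] by (auto simp: positive_sets_def)
qed

lemma positive_Diff_finite: "A \<in> positive_sets J \<Longrightarrow> finite F \<Longrightarrow> A - F \<in> positive_sets J"
  using positive_Int_cover[of A "A - F" "A \<inter> F"] finite_in_ideal[OF nontrivial, of "A \<inter> F"]
  by (auto simp: positive_sets_def Diff_eq)

lemma positive_nonempty: "A \<in> positive_sets J \<Longrightarrow> A \<noteq> {}"
  using finite_in_ideal[OF nontrivial, of "{}"] by (auto simp: positive_sets_def)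

lemma positive_Int: "A \<in> positive_sets J \<Longrightarrow> B \<in> positive_sets J \<Longrightarrow> A \<inter> B \<in> positive_sets J"
  using positive_Int_cover[of A B "Npos - B"] set_or_complement[of B]
  by (auto simp: positive_sets_def)

lemma positive_INT:
  assumes "finite F" "B \<in> positive_sets J" "\<And>x. x \<in> F \<Longrightarrow> h x \<in> positive_sets J"
  shows "B \<inter> (\<Inter>x\<in>F. h x) \<in> positive_sets J"
  using assms(1,3)
proof (induction F rule: finite_induct)
  case empty
  then show ?case using assms(2) by simp
next
  case (insert x F)
  then have "(B \<inter> (\<Inter>x\<in>F. h x)) \<inter> h x \<in> positive_sets J"
    by (simp add: positive_Int)
  then show ?case
    by (simp add: Int_ac)
qed

end

definition colour_nbhd :: "(nat \<Rightarrow> nat \<Rightarrow> 'c) \<Rightarrow> 'c \<Rightarrow> nat \<Rightarrow> nat set" where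
  "colour_nbhd c i x = {y \<in> Npos. y \<noteq> x \<and> edge_color c x y = i}"

lemma edge_color_commute: "edge_color c x y = edge_color c y x"
  by (simp add: edge_color_def min.commute max.commute)

context maximal_ideal
begin

lemma positive_colour_nbhd_exists:
  assumes "finite_coloring c" "x \<in> Npos"
  shows "\<exists>k\<in>{c s t | s t. 1 \<le> s \<and> s < t}. colour_nbhd c k x \<in> positive_sets J"
proof -
  let ?colours = "{c s t | s t. 1 \<le> s \<and> s < t}"
  have "Npos - {x} \<subseteq> (\<Union>k\<in>?colours. colour_nbhd c k x)"
  proof
    fix y
    assume y: "y \<in> Npos - {x}"
    then have "1 \<le> min x y" "min x y < max x y"
      using assms(2) by (auto simp: Npos_def)
    then have "edge_color c x y \<in> ?colours"
      unfolding edge_color_def by blast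
    moreover have "y \<in> colour_nbhd c (edge_color c x y) x"
      using y by (simp add: colour_nbhd_def)
    ultimately show "y \<in> (\<Union>k\<in>?colours. colour_nbhd c k x)"
      by blast
  qed
  moreover have "Npos - {x} \<in> positive_sets J"
    by (rule positive_Diff_finite[OF Npos_positive]) simp
  moreover have "finite ?colours"
    using assms(1) by (simp add: finite_coloring_def)
  ultimately obtain k where k: "k \<in> ?colours" "(Npos - {x}) \<inter> colour_nbhd c k x \<in> positive_sets J"
    using positive_cover by blast
  have "colour_nbhd c k x \<subseteq> Npos"
    by (auto simp: colour_nbhd_def)
  with k show ?thesis
    using positive_superset[OF k(2) Int_lower2] by blast
qed

text \<open>Colour every point by a colour of a positive neighbourhood; one colour class is
  positive.\<close>

lemma positive_colour_nbhds:
  assumes "finite_coloring c"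
  obtains i A where "A \<in> positive_sets J" "\<And>x. x \<in> A \<Longrightarrow> colour_nbhd c i x \<in> positive_sets J"
proof -
  let ?colours = "{c s t | s t. 1 \<le> s \<and> s < t}"
  have "\<forall>x\<in>Npos. \<exists>k. k \<in> ?colours \<and> colour_nbhd c k x \<in> positive_sets J"
    using positive_colour_nbhd_exists[OF assms] by blast
  from bchoice[OF this] obtain chi
    where chi: "\<forall>x\<in>Npos. chi x \<in> ?colours \<and> colour_nbhd c (chi x) x \<in> positive_sets J" ..
  then have "Npos \<subseteq> (\<Union>k\<in>?colours. {x. chi x = k})"
    by blast
  moreover have "finite ?colours"
    using assms by (simp add: finite_coloring_def)
  ultimately have "\<exists>i\<in>?colours. Npos \<inter> {x. chi x = i} \<in> positive_sets J"
    using positive_cover[OF _ Npos_positive] by blast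
  then obtain i where i: "Npos \<inter> {x. chi x = i} \<in> positive_sets J"
    by blast
  moreover have "colour_nbhd c i x \<in> positive_sets J" if "x \<in> Npos \<inter> {x. chi x = i}" for x
    using chi that by auto
  ultimately show ?thesis
    by (rule that)
qed
end

lemma chain_limit_eq:
  fixes P :: "nat \<Rightarrow> 'a set" and g :: "nat \<Rightarrow> 'a \<Rightarrow> 'b"
  assumes P_mono: "\<And>n. P n \<subseteq> P (Suc n)" and g_agree: "\<And>n x. x \<in> P n \<Longrightarrow> g (Suc n) x = g n x"
    and x: "x \<in> P n"
  shows "g (LEAST m. x \<in> P m) x = g n x"
proof -
  define k where "k = (LEAST m. x \<in> P m)"
  have "k \<le> n" and xk: "x \<in> P k"
    unfolding k_def using x by (auto intro: Least_le LeastI)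
  have "g m x = g k x" if "k \<le> m" for m
    using that
  proof (induction m rule: dec_induct)
    case (step m)
    then have "x \<in> P m"
      using lift_Suc_mono_le[of P, OF P_mono] xk by blast
    with step show ?case
      using g_agree by simp
  qed simp
  with \<open>k \<le> n\<close> have "g n x = g k x"
    by blast
  then show ?thesis
    unfolding k_def by simp
qed

locale copy_construction = maximal_ideal +
  fixes V :: "'a set" and E :: "'a \<Rightarrow> 'a \<Rightarrow> bool"
    and c :: "nat \<Rightarrow> nat \<Rightarrow> 'c" and i :: 'c and A :: "nat set"
  assumes graph: "is_graph V E"
    and A_positive: "A \<in> positive_sets J"
    and nbhd_positive: "\<And>x. x \<in> A \<Longrightarrow> colour_nbhd c i x \<in> positive_sets J"
begin

definition partial_copy :: "('a \<Rightarrow> nat) \<Rightarrow> 'a set \<Rightarrow> bool" where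
  "partial_copy g P \<longleftrightarrow>
     inj_on g P \<and> g ` P \<subseteq> A \<and> (\<forall>u\<in>P. \<forall>v\<in>P. E u v \<longrightarrow> edge_color c (g u) (g v) = i)"

lemma partial_copy_insert:
  assumes g: "partial_copy g P" and "v \<notin> P" "p \<in> A" "p \<notin> g ` P"
    and adj: "\<And>u. u \<in> P \<Longrightarrow> E u v \<Longrightarrow> p \<in> colour_nbhd c i (g u)"
  shows "partial_copy (g(v := p)) (insert v P)"
  unfolding partial_copy_def
proof (intro conjI ballI impI)
  show "inj_on (g(v := p)) (insert v P)" "(g(v := p)) ` insert v P \<subseteq> A"
    using g assms(2-4) by (auto simp: partial_copy_def inj_on_def)
next
  have E_sym: "E u w \<Longrightarrow> E w u" and E_irrefl: "E u w \<Longrightarrow> u \<noteq> w" for u w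
    using graph by (auto simp: is_graph_def)
  have new_edge: "edge_color c (g u) p = i" if "u \<in> P" "E u v" for u
    using adj[OF that] by (simp add: colour_nbhd_def)
  fix u w
  assume "u \<in> insert v P" "w \<in> insert v P" "E u w"
  moreover have "\<not> E v v"
    using E_irrefl by blast
  ultimately show "edge_color c ((g(v := p)) u) ((g(v := p)) w) = i"
    using g \<open>v \<notin> P\<close> new_edge[of u] new_edge[of w] E_sym
    by (auto simp: partial_copy_def edge_color_commute)
qed

lemma positive_common_nbhd:
  assumes "partial_copy g P" "finite F" "F \<subseteq> P"
  shows "A \<inter> (\<Inter>u\<in>F. colour_nbhd c i (g u)) \<in> positive_sets J"
  using assms(2) A_positive
proof (rule positive_INT)
  fix u
  assume "u \<in> F"
  with assms(1,3) show "colour_nbhd c i (g u) \<in> positive_sets J"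
    using nbhd_positive by (auto simp: partial_copy_def)
qed

lemma partial_copy_new_point:
  assumes "partial_copy g P" "finite P"
  obtains p where "p \<in> A" "p \<notin> g ` P" "\<And>u. u \<in> P \<Longrightarrow> E u v \<Longrightarrow> p \<in> colour_nbhd c i (g u)"
proof -
  have "A \<inter> (\<Inter>u\<in>{u \<in> P. E u v}. colour_nbhd c i (g u)) \<in> positive_sets J"
    using positive_common_nbhd[OF assms(1)] \<open>finite P\<close> by simp
  then have "A \<inter> (\<Inter>u\<in>{u \<in> P. E u v}. colour_nbhd c i (g u)) - g ` P \<noteq> {}"
    using positive_nonempty positive_Diff_finite \<open>finite P\<close> by blast
  with that show ?thesis
    by blast
qed

lemma partial_copy_exists: "finite P \<Longrightarrow> \<exists>g. partial_copy g P"
proof (induction P rule: finite_induct)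
  case empty
  show ?case by (simp add: partial_copy_def)
next
  case (insert v P)
  then obtain g where g: "partial_copy g P"
    by blast
  obtain p where "p \<in> A" "p \<notin> g ` P" "\<And>u. u \<in> P \<Longrightarrow> E u v \<Longrightarrow> p \<in> colour_nbhd c i (g u)"
    using partial_copy_new_point[OF g insert(1)] by blast
  then show ?case
    using partial_copy_insert[OF g insert(2)] by blast
qed

lemma partial_copy_chain_limit:
  assumes P_mono: "\<And>n. P n \<subseteq> P (Suc n)" and g_agree: "\<And>n x. x \<in> P n \<Longrightarrow> g (Suc n) x = g n x"
    and copies: "\<And>n. partial_copy (g n) (P n)"
  shows "partial_copy (\<lambda>x. g (LEAST n. x \<in> P n) x) (\<Union>n. P n)"
proof -
  let ?f = "\<lambda>x. g (LEAST n. x \<in> P n) x"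
  have common: "\<exists>n. x \<in> P n \<and> y \<in> P n \<and> ?f x = g n x \<and> ?f y = g n y"
    if xy: "x \<in> (\<Union>n. P n)" "y \<in> (\<Union>n. P n)" for x y
  proof -
    obtain m n where "x \<in> P m" "y \<in> P n"
      using xy by blast
    then have "x \<in> P (max m n)" "y \<in> P (max m n)"
      using lift_Suc_mono_le[of P, OF P_mono] by (meson max.cobounded1 max.cobounded2 subsetD)+
    then show ?thesis
      using chain_limit_eq[of P g, OF P_mono g_agree] by blast
  qed
  show ?thesis
    unfolding partial_copy_def
  proof (intro conjI inj_onI subsetI ballI impI)
    fix x y
    assume "x \<in> (\<Union>n. P n)" "y \<in> (\<Union>n. P n)" "?f x = ?f y"
    then obtain n where "x \<in> P n" "y \<in> P n" "g n x = g n y"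
      using common[of x y] by auto
    with copies[of n] show "x = y"
      by (auto simp: partial_copy_def dest: inj_onD)
  next
    fix a
    assume "a \<in> ?f ` (\<Union>n. P n)"
    then obtain x where "x \<in> (\<Union>n. P n)" "a = ?f x"
      by blast
    with common[of x x] copies show "a \<in> A"
      by (auto simp: partial_copy_def)
  next
    fix x y
    assume "x \<in> (\<Union>n. P n)" "y \<in> (\<Union>n. P n)" "E x y"
    with common[of x y] copies show "edge_color c (?f x) (?f y) = i"
      by (auto simp: partial_copy_def)
  qed
qed

definition copy_stage :: "'a set \<Rightarrow> ('a \<Rightarrow> nat) \<Rightarrow> 'a set \<Rightarrow> ('a \<Rightarrow> nat) \<Rightarrow> bool" where
  "copy_stage S g0 P g \<longleftrightarrow> partial_copy g P \<and> finite P \<and> S \<subseteq> P \<and> P \<subseteq> V \<and> (\<forall>s\<in>S. g s = g0 s)"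

lemma copy_stage_add_vertex:
  assumes stage: "copy_stage S g0 P g" and "v \<in> V"
  shows "\<exists>P' g'. copy_stage S g0 P' g' \<and> P \<subseteq> P' \<and> (\<forall>x\<in>P. g' x = g x) \<and> v \<in> P'"
proof (cases "v \<in> P")
  case False
  have g: "partial_copy g P" and "finite P"
    using stage by (auto simp: copy_stage_def)
  obtain p where "p \<in> A" "p \<notin> g ` P" "\<And>u. u \<in> P \<Longrightarrow> E u v \<Longrightarrow> p \<in> colour_nbhd c i (g u)"
    using partial_copy_new_point[OF g \<open>finite P\<close>] by blast
  then have "partial_copy (g(v := p)) (insert v P)"
    using partial_copy_insert[OF g False] by blast
  with stage False \<open>v \<in> V\<close> have "copy_stage S g0 (insert v P) (g(v := p))"
    by (auto simp: copy_stage_def)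
  with False show ?thesis
    by (intro exI[of _ "insert v P"] exI[of _ "g(v := p)"]) auto
qed (use stage in blast)

lemma copy_stage_add_value:
  assumes no_dom: "\<not> (\<exists>D. finite D \<and> dominating (V - S) E D)"
    and stage: "copy_stage S g0 P g" and b: "b \<in> A \<inter> (\<Inter>s\<in>S. colour_nbhd c i (g0 s))"
  shows "\<exists>P' g'. copy_stage S g0 P' g' \<and> P \<subseteq> P' \<and> (\<forall>x\<in>P. g' x = g x) \<and> b \<in> g' ` P'"
proof (cases "b \<in> g ` P")
  case False
  have g: "partial_copy g P" and P: "finite P" "S \<subseteq> P" "P \<subseteq> V" and g_S: "\<forall>s\<in>S. g s = g0 s"
    using stage by (auto simp: copy_stage_def)
  have "\<not> dominating (V - S) E (P - S)"
    using no_dom P(1) by blast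
  then obtain v where v: "v \<in> V" "v \<notin> P" "\<And>u. u \<in> P - S \<Longrightarrow> \<not> E v u"
    using P(3) by (auto simp: dominating_def)
  have "b \<in> colour_nbhd c i (g u)" if "u \<in> P" "E u v" for u
  proof -
    have "E v u"
      using graph that(2) by (simp add: is_graph_def)
    then have "u \<in> S"
      using v(3) that(1) by blast
    with b g_S show ?thesis
      by auto
  qed
  then have "partial_copy (g(v := b)) (insert v P)"
    using partial_copy_insert[OF g v(2) _ False] b by blast
  with stage v have "copy_stage S g0 (insert v P) (g(v := b))"
    by (auto simp: copy_stage_def)
  with v(2) show ?thesis
    by (intro exI[of _ "insert v P"] exI[of _ "g(v := b)"]) auto
qed (use stage in blast)

lemma copy_stage_chain:
  assumes no_dom: "\<not> (\<exists>D. finite D \<and> dominating (V - S) E D)" and "copy_stage S g0 S g0"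
    and vs: "range vs \<subseteq> V" and bs: "range bs \<subseteq> A \<inter> (\<Inter>s\<in>S. colour_nbhd c i (g0 s))"
  obtains P g where "\<And>n. copy_stage S g0 (P n) (g n)" "\<And>n. P n \<subseteq> P (Suc n)"
    "\<And>n x. x \<in> P n \<Longrightarrow> g (Suc n) x = g n x"
    "\<And>n. vs n \<in> P (Suc n)" "\<And>n. bs n \<in> g (Suc n) ` P (Suc n)"
proof -
  let ?Q = "\<lambda>n q q'. fst q \<subseteq> fst q' \<and> (\<forall>x\<in>fst q. snd q' x = snd q x)
    \<and> vs n \<in> fst q' \<and> bs n \<in> snd q' ` fst q'"
  have "\<exists>seq. \<forall>n. copy_stage S g0 (fst (seq n)) (snd (seq n)) \<and> ?Q n (seq n) (seq (Suc n))"
  proof (rule dependent_nat_choice)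
    show "\<exists>q. copy_stage S g0 (fst q) (snd q)"
      using \<open>copy_stage S g0 S g0\<close> by (intro exI[of _ "(S, g0)"]) simp
  next
    fix q n
    assume "copy_stage S g0 (fst q) (snd q)"
    then obtain P1 g1 where 1: "copy_stage S g0 P1 g1" "fst q \<subseteq> P1" "\<forall>x\<in>fst q. g1 x = snd q x"
      "vs n \<in> P1"
      using copy_stage_add_vertex[of S g0 "fst q" "snd q" "vs n"] vs by blast
    obtain P2 g2 where 2: "copy_stage S g0 P2 g2" "P1 \<subseteq> P2" "\<forall>x\<in>P1. g2 x = g1 x" "bs n \<in> g2 ` P2"
      using copy_stage_add_value[OF no_dom 1(1), of "bs n"] bs by blast
    have "fst q \<subseteq> P2" "\<forall>x\<in>fst q. g2 x = snd q x" "vs n \<in> P2"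
      using 1(2-4) 2(2,3) by auto
    with 2(1,4) show "\<exists>q'. copy_stage S g0 (fst q') (snd q') \<and> ?Q n q q'"
      by (intro exI[of _ "(P2, g2)"]) simp
  qed
  then obtain seq where "\<And>n. copy_stage S g0 (fst (seq n)) (snd (seq n))"
    "\<And>n. ?Q n (seq n) (seq (Suc n))"
    by blast
  then show ?thesis
    using that[of "\<lambda>n. fst (seq n)" "\<lambda>n. snd (seq n)"] by blast
qed

lemma copy_covering_common_nbhd:
  assumes "countable V" "V \<noteq> {}" and no_dom: "\<not> (\<exists>D. finite D \<and> dominating (V - S) E D)"
    and "finite S" "S \<subseteq> V" "partial_copy g0 S"
    and B_def: "B = A \<inter> (\<Inter>s\<in>S. colour_nbhd c i (g0 s))" and "B \<noteq> {}"
  obtains f where "partial_copy f V" "B \<subseteq> f ` V"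
proof -
  have "copy_stage S g0 S g0"
    using assms(4-6) by (simp add: copy_stage_def)
  then obtain P g where P: "\<And>n. copy_stage S g0 (P n) (g n)" "\<And>n. P n \<subseteq> P (Suc n)"
    and g_agree: "\<And>n x. x \<in> P n \<Longrightarrow> g (Suc n) x = g n x"
    and vs: "\<And>n. from_nat_into V n \<in> P (Suc n)"
    and bs: "\<And>n. from_nat_into B n \<in> g (Suc n) ` P (Suc n)"
    using copy_stage_chain[OF no_dom, of g0 "from_nat_into V" "from_nat_into B"]
      from_nat_into[OF \<open>V \<noteq> {}\<close>] from_nat_into[OF \<open>B \<noteq> {}\<close>] B_def by blast
  let ?f = "\<lambda>x. g (LEAST n. x \<in> P n) x"
  have "(\<Union>n. P n) = V"
  proof
    show "(\<Union>n. P n) \<subseteq> V"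
      using P(1) by (auto simp: copy_stage_def)
    show "V \<subseteq> (\<Union>n. P n)"
      using vs from_nat_into_surj[OF \<open>countable V\<close>] by blast
  qed
  moreover have "partial_copy ?f (\<Union>n. P n)"
    using partial_copy_chain_limit[of P g, OF P(2) g_agree] P(1) by (simp add: copy_stage_def)
  moreover have "B \<subseteq> ?f ` (\<Union>n. P n)"
  proof
    fix b
    assume "b \<in> B"
    then obtain n where "b = from_nat_into B n"
      using from_nat_into_surj[of B b] by auto
    then obtain x where x: "x \<in> P (Suc n)" "b = g (Suc n) x"
      using bs by blast
    then have "b = ?f x"
      using chain_limit_eq[of P g, OF P(2) g_agree x(1)] by simp
    with x(1) show "b \<in> ?f ` (\<Union>n. P n)"
      by blast
  qed
  ultimately show ?thesis
    using that[of ?f] by simp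
qed

end

lemma ideal_plus_Ramsey_if_finitely_ruled:
  assumes graph: "is_graph V E" and "countable V" "V \<noteq> {}"
    and ruled: "finitely_ruled V E" and I: "nontrivial_ideal I"
  shows "ideal_plus_Ramsey V E I"
  unfolding ideal_plus_Ramsey_def
proof (intro allI impI)
  fix c :: "nat \<Rightarrow> nat \<Rightarrow> nat"
  assume "finite_coloring c"
  obtain S where S: "finite S" "S \<subseteq> V" and no_dom: "\<not> (\<exists>D. finite D \<and> dominating (V - S) E D)"
    using ruled unfolding finitely_ruled_def by blast
  obtain J where J: "nontrivial_ideal J" "I \<subseteq> J" "\<forall>A. A \<subseteq> Npos \<longrightarrow> A \<in> J \<or> Npos - A \<in> J"
    using maximal_ideal_exists[OF I] by blast
  interpret maximal_ideal J
    using J by unfold_locales blast+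
  obtain i A where A: "A \<in> positive_sets J" "\<And>x. x \<in> A \<Longrightarrow> colour_nbhd c i x \<in> positive_sets J"
    using positive_colour_nbhds[OF \<open>finite_coloring c\<close>] by blast
  interpret copy_construction J V E c i A
    using graph A by unfold_locales blast+
  obtain g0 where g0: "partial_copy g0 S"
    using partial_copy_exists[OF S(1)] by blast
  define B where "B = A \<inter> (\<Inter>s\<in>S. colour_nbhd c i (g0 s))"
  have B: "B \<in> positive_sets J"
    unfolding B_def using positive_common_nbhd[OF g0 S(1)] by simp
  then obtain f where f: "partial_copy f V" "B \<subseteq> f ` V"
    using copy_covering_common_nbhd[OF \<open>countable V\<close> \<open>V \<noteq> {}\<close> no_dom S g0 B_def]
      positive_nonempty[OF B] by blast
  have "f ` V \<subseteq> Npos"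
    using f(1) A(1) by (auto simp: partial_copy_def positive_sets_def)
  then have "f ` V \<in> positive_sets J"
    using positive_superset[OF B f(2)] by blast
  with J(2) have "f ` V \<in> positive_sets I"
    by (auto simp: positive_sets_def)
  moreover have "mono_copy_on V E c (f ` V)"
    using f(1) \<open>f ` V \<subseteq> Npos\<close> unfolding mono_copy_on_def partial_copy_def by blast
  ultimately show "\<exists>X. X \<in> positive_sets I \<and> mono_copy_on V E c X"
    by blast
qed

theorem mainTheorem16:
  fixes V :: "'a set" and E :: "'a \<Rightarrow> 'a \<Rightarrow> bool"
  assumes "is_graph V E" and "countable V" and "infinite V"
  shows "((\<forall>I. nontrivial_ideal I \<longrightarrow> ideal_plus_Ramsey V E I)
            \<longleftrightarrow> (\<exists>X. X \<in> nwd_plus \<and> mono_copy_on V E rado X))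
       \<and> ((\<exists>X. X \<in> nwd_plus \<and> mono_copy_on V E rado X) \<longleftrightarrow> finitely_ruled V E)"
proof -
  have i_ii: "\<exists>X. X \<in> nwd_plus \<and> mono_copy_on V E rado X"
    if "\<forall>I. nontrivial_ideal I \<longrightarrow> ideal_plus_Ramsey V E I"
    using that nontrivial_ideal_nwd finite_coloring_rado
    unfolding ideal_plus_Ramsey_def positive_sets_def nwd_plus_def by blast
  have ii_iii: "finitely_ruled V E" if "\<exists>X. X \<in> nwd_plus \<and> mono_copy_on V E rado X"
    using that nwd_if_rado_copy_not_finitely_ruled unfolding nwd_plus_def by blast
  have iii_i: "\<forall>I. nontrivial_ideal I \<longrightarrow> ideal_plus_Ramsey V E I" if "finitely_ruled V E"
    using ideal_plus_Ramsey_if_finitely_ruled[OF assms(1,2) _ that] \<open>infinite V\<close> by blast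
  from i_ii ii_iii iii_i show ?thesis
    by blast
qed

end
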